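(* For all positive integers $k$ and $r$ there exists $q_0$ such that the following holds for every $q\ge q_0$. Let $\mathcal H$ be a 3-graph containing a copy $S$ of $S_q^3$, and suppose that to each of the $3q$ edges (2-subsets) $e$ contained in the hyperedges of $S$ an integer $w(e)$ with $0\le w(e)\le k$ is assigned such that $e$ is contained in at least $w(e)+1$ hyperedges of $\mathcal H$. Then some $r$ of the hyperedges of $S$ form a copy $S'$ of $S_r^3$ which is nice, i.e., for each edge $e$ contained in a hyperedge of $S'$, the link set of $e$ in $\mathcal H$ contains at least $w(e)$ vertices not belonging to $V(S')$.
   Context: $S_q^3$ denotes the 3-graph consisting of $q$ hyperedges that pairwise share exactly one common vertex (the center) and are otherwise disjoint. The link set of a pair $e=\{a,b\}$ in a 3-graph $\mathcal H$ is the set of vertices $c$ such that $\{a,b,c\}$ is a hyperedge of $\mathcal H$. *)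

theory Defs
  imports Main
begin

definition three_graph :: "'a set set \<Rightarrow> bool" where
  "three_graph H \<longleftrightarrow> finite H \<and> (\<forall>A\<in>H. card A = 3)"

definition is_star :: "'a set set \<Rightarrow> nat \<Rightarrow> bool" where
  "is_star S q \<longleftrightarrow> finite S \<and> card S = q \<and> (\<forall>A\<in>S. card A = 3) \<and>
     (\<exists>c. \<forall>A\<in>S. \<forall>B\<in>S. A \<noteq> B \<longrightarrow> A \<inter> B = {c})"

definition shadow2 :: "'a set set \<Rightarrow> 'a set set" where
  "shadow2 S = {e. card e = 2 \<and> (\<exists>A\<in>S. e \<subseteq> A)}"

definition link :: "'a set set \<Rightarrow> 'a set \<Rightarrow> 'a set" where
  "link H e = {c. c \<notin> e \<and> insert c e \<in> H}"

end

theory Submission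
  imports Defs
begin

text \<open>
  Every hyperedge \<open>A\<close> of the star reserves, for each of its three pairs \<open>e\<close>, a set of \<open>w e\<close>
  link vertices of \<open>e\<close> outside \<open>A\<close>; this is possible because at most one link vertex of \<open>e\<close>
  lies in \<open>A\<close>. The reserved set \<open>X A\<close> has at most \<open>3k\<close> elements. Since two hyperedges of
  the star meet only in the centre, which lies in \<open>A\<close>, at most \<open>3k\<close> other hyperedges meet
  \<open>X A\<close>. The digraph "\<open>B\<close> meets \<open>X A\<close>" thus has out-degree at most \<open>3k\<close>, so it has an
  independent set of size \<open>r\<close> once \<open>q \<ge> (6k+1) r\<close>, and such an independent set is a nice
  copy of \<open>S\<^sub>r\<^sup>3\<close>.
\<close>

lemma card_filter_eq_sum:
  assumes "finite V"
  shows "card {y\<in>V. P y} = (\<Sum>y\<in>V. if P y then 1 else 0)"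
  using sum.inter_filter[OF assms, of "\<lambda>_. (1::nat)" P] by simp

lemma exists_vertex_low_total_degree:
  assumes fin: "finite V" and ne: "V \<noteq> {}"
    and out: "\<forall>x\<in>V. card {y\<in>V. R x y} \<le> d"
  shows "\<exists>x\<in>V. card {y\<in>V. R x y \<or> R y x} \<le> 2*d"
proof (rule ccontr)
  assume "\<not> ?thesis"
  hence big: "\<forall>x\<in>V. 2*d + 1 \<le> card {y\<in>V. R x y \<or> R y x}" by auto
  have in_eq_out: "(\<Sum>x\<in>V. card {y\<in>V. R y x}) = (\<Sum>x\<in>V. card {y\<in>V. R x y})"
  proof -
    have "(\<Sum>x\<in>V. card {y\<in>V. R y x}) = (\<Sum>x\<in>V. \<Sum>y\<in>V. if R y x then 1 else 0)"
      using card_filter_eq_sum[OF fin] by simp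
    also have "\<dots> = (\<Sum>y\<in>V. \<Sum>x\<in>V. if R y x then 1 else 0)" by (rule sum.swap)
    also have "\<dots> = (\<Sum>y\<in>V. card {x\<in>V. R y x})"
      using card_filter_eq_sum[OF fin] by simp
    finally show ?thesis .
  qed
  have "(2*d+1) * card V = (\<Sum>x\<in>V. 2*d+1)" by simp
  also have "\<dots> \<le> (\<Sum>x\<in>V. card {y\<in>V. R x y \<or> R y x})"
    by (rule sum_mono) (use big in auto)
  also have "\<dots> \<le> (\<Sum>x\<in>V. card {y\<in>V. R x y} + card {y\<in>V. R y x})"
  proof (rule sum_mono)
    fix x
    have "{y\<in>V. R x y \<or> R y x} = {y\<in>V. R x y} \<union> {y\<in>V. R y x}" by auto
    thus "card {y\<in>V. R x y \<or> R y x} \<le> card {y\<in>V. R x y} + card {y\<in>V. R y x}"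
      by (metis card_Un_le)
  qed
  also have "\<dots> = 2 * (\<Sum>x\<in>V. card {y\<in>V. R x y})"
    by (simp add: sum.distrib in_eq_out)
  also have "\<dots> \<le> 2 * (d * card V)"
    using sum_mono[of V "\<lambda>x. card {y\<in>V. R x y}" "\<lambda>_. d"] out by (simp add: mult.commute)
  finally have "(2*d+1) * card V \<le> 2 * (d * card V)" .
  moreover have "card V > 0" using fin ne by auto
  ultimately show False by (simp add: algebra_simps)
qed

text \<open>Greedy selection: a vertex of total degree at most \<open>2d\<close> and its neighbours remove at most
  \<open>2d+1\<close> vertices, and out-degrees do not grow in the remaining induced subgraph.\<close>

lemma exists_independent_subset_bounded_outdegree:
  assumes "finite V" "\<forall>x\<in>V. card {y\<in>V. R x y} \<le> d" "(2*d+1)*r \<le> card V"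
  shows "\<exists>I\<subseteq>V. card I = r \<and> (\<forall>x\<in>I. \<forall>y\<in>I. x \<noteq> y \<longrightarrow> \<not> R x y)"
  using assms
proof (induction r arbitrary: V)
  case 0
  then show ?case by auto
next
  case (Suc r)
  have "V \<noteq> {}" using Suc.prems(3) by auto
  then obtain x where x: "x \<in> V" and lx: "card {y\<in>V. R x y \<or> R y x} \<le> 2*d"
    using exists_vertex_low_total_degree[OF Suc.prems(1) _ Suc.prems(2)] by blast
  define N where "N = insert x {y\<in>V. R x y \<or> R y x}"
  define V' where "V' = V - N"
  have NV: "N \<subseteq> V" using x by (auto simp: N_def)
  have "card N \<le> 2*d+1"
    using lx Suc.prems(1) by (simp add: N_def card_insert_if)
  moreover have "card V' = card V - card N"
    unfolding V'_def using card_Diff_subset[OF finite_subset[OF NV Suc.prems(1)] NV] .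
  ultimately have "(2*d+1)*r \<le> card V'" using Suc.prems(3) by simp
  moreover have "\<forall>z\<in>V'. card {y\<in>V'. R z y} \<le> d"
  proof
    fix z assume "z \<in> V'"
    have "card {y\<in>V'. R z y} \<le> card {y\<in>V. R z y}"
      by (rule card_mono) (use Suc.prems(1) in \<open>auto simp: V'_def\<close>)
    thus "card {y\<in>V'. R z y} \<le> d" using Suc.prems(2) \<open>z \<in> V'\<close> by (fastforce simp: V'_def)
  qed
  moreover have fV': "finite V'" using Suc.prems(1) by (simp add: V'_def)
  ultimately obtain I where I: "I \<subseteq> V'" "card I = r" "\<forall>x\<in>I. \<forall>y\<in>I. x \<noteq> y \<longrightarrow> \<not> R x y"
    using Suc.IH by blast
  have "x \<notin> I" using I(1) by (auto simp: V'_def N_def)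
  moreover have "finite I" using I(1) fV' finite_subset by blast
  ultimately show ?case
    using I x by (intro exI[of _ "insert x I"]) (auto simp: V'_def N_def)
qed

lemma finite_if_card_eq_3: "card A = 3 \<Longrightarrow> finite A"
  by (rule card_ge_0_finite) simp

lemma finite_link:
  assumes "three_graph H"
  shows "finite (link H e)"
proof (rule finite_subset)
  show "link H e \<subseteq> \<Union>H" by (auto simp: link_def)
  show "finite (\<Union>H)" using assms finite_if_card_eq_3 by (auto simp: three_graph_def)
qed

lemma card_hyperedges_containing_le_card_link:
  assumes H: "three_graph H" and e: "card e = 2"
  shows "card {A\<in>H. e \<subseteq> A} \<le> card (link H e)"
proof -
  have "{A\<in>H. e \<subseteq> A} \<subseteq> (\<lambda>c. insert c e) ` link H e"
  proof
    fix A assume A: "A \<in> {A\<in>H. e \<subseteq> A}"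
    hence "card (A - e) = 1"
      using H e card_Diff_subset[of e A] by (auto simp: three_graph_def card_ge_0_finite)
    then obtain c where "A - e = {c}" using card_1_singletonE by blast
    hence "c \<notin> e" "A = insert c e" using A by auto
    thus "A \<in> (\<lambda>c. insert c e) ` link H e" using A by (auto simp: link_def)
  qed
  hence "card {A\<in>H. e \<subseteq> A} \<le> card ((\<lambda>c. insert c e) ` link H e)"
    using finite_link[OF H] by (intro card_mono) auto
  also have "\<dots> \<le> card (link H e)" by (rule card_image_le[OF finite_link[OF H]])
  finally show ?thesis .
qed

lemma card_link_outside_hyperedge:
  assumes H: "three_graph H" and e: "card e = 2" and A: "card A = 3" "e \<subseteq> A"
  shows "card {A\<in>H. e \<subseteq> A} \<le> card (link H e - A) + 1"
proof -
  have "finite A" using A finite_if_card_eq_3 by blast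
  have "card (A - e) = 1" using A e card_Diff_subset[of e A] by (simp add: card_ge_0_finite)
  moreover have "link H e \<inter> A \<subseteq> A - e" by (auto simp: link_def)
  ultimately have "card (link H e \<inter> A) \<le> 1"
    using card_mono[of "A - e" "link H e \<inter> A"] \<open>finite A\<close> by simp
  moreover have "card (link H e - A) = card (link H e) - card (link H e \<inter> A)"
    using finite_link[OF H] by (intro card_Diff_subset_Int) simp
  moreover have "card (link H e \<inter> A) \<le> card (link H e)"
    using finite_link[OF H] by (intro card_mono) auto
  ultimately show ?thesis
    using card_hyperedges_containing_le_card_link[OF H e] by linarith
qed

lemma exists_reserved_link_vertices:
  assumes H: "three_graph H" and A: "card A = 3"
    and w: "\<forall>e. e \<subseteq> A \<and> card e = 2 \<longrightarrow> w e \<le> k \<and> w e + 1 \<le> card {B\<in>H. e \<subseteq> B}"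
  shows "\<exists>X. finite X \<and> X \<inter> A = {} \<and> card X \<le> 3*k \<and>
           (\<forall>e. e \<subseteq> A \<and> card e = 2 \<longrightarrow> w e \<le> card (link H e \<inter> X))"
proof -
  define E where "E = {e. e \<subseteq> A \<and> card e = 2}"
  have "\<exists>W. W \<subseteq> link H e - A \<and> card W = w e" if "e \<in> E" for e
  proof -
    have e: "e \<subseteq> A" "card e = 2" using that by (simp_all add: E_def)
    hence "w e + 1 \<le> card {B\<in>H. e \<subseteq> B}" using w by blast
    hence "w e \<le> card (link H e - A)"
      using card_link_outside_hyperedge[OF H e(2) A e(1)] by linarith
    thus ?thesis by (meson obtain_subset_with_card_n)
  qed
  then obtain W where W: "\<And>e. e \<in> E \<Longrightarrow> W e \<subseteq> link H e - A \<and> card (W e) = w e"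
    by (metis bchoice)
  have finE: "finite E" and cardE: "card E = 3"
    using n_subsets[of A 2] A finite_if_card_eq_3[OF A] by (simp_all add: E_def choose_two)
  have finW: "finite (W e)" if "e \<in> E" for e
    using W[OF that] finite_link[OF H] finite_subset by blast
  define X where "X = (\<Union>e\<in>E. W e)"
  have finX: "finite X" using finE finW by (simp add: X_def)
  have "card X \<le> (\<Sum>e\<in>E. card (W e))" unfolding X_def by (rule card_UN_le[OF finE])
  also have "\<dots> \<le> (\<Sum>e\<in>E. k)"
    using W w by (intro sum_mono) (simp add: E_def)
  finally have "card X \<le> 3*k" using cardE by simp
  moreover have "X \<inter> A = {}" using W by (auto simp: X_def)
  moreover have "w e \<le> card (link H e \<inter> X)" if "e \<subseteq> A" "card e = 2" for e
  proof -
    have "e \<in> E" using that by (simp add: E_def)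
    hence "W e \<subseteq> link H e \<inter> X" using W by (auto simp: X_def)
    hence "card (W e) \<le> card (link H e \<inter> X)" using finX by (intro card_mono) auto
    thus ?thesis using W[OF \<open>e \<in> E\<close>] by simp
  qed
  ultimately show ?thesis using finX by blast
qed

text \<open>Distinct hyperedges meeting \<open>X\<close> do so in distinct vertices: their only common vertex is the
  centre, which lies in \<open>A\<close> and hence not in \<open>X\<close>.\<close>

lemma card_star_edges_meeting_le:
  assumes centre: "\<forall>A\<in>S. \<forall>B\<in>S. A \<noteq> B \<longrightarrow> A \<inter> B = {c}"
    and A: "A \<in> S" and X: "finite X" "X \<inter> A = {}"
  shows "card {B\<in>S. B \<noteq> A \<and> B \<inter> X \<noteq> {}} \<le> card X"
proof -
  let ?M = "{B\<in>S. B \<noteq> A \<and> B \<inter> X \<noteq> {}}"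
  define f where "f B = (SOME v. v \<in> B \<inter> X)" for B
  have f: "f B \<in> B \<inter> X" if "B \<in> ?M" for B
    unfolding f_def by (rule someI_ex) (use that in blast)
  have "inj_on f ?M"
  proof (rule inj_onI)
    fix B B' assume B: "B \<in> ?M" and B': "B' \<in> ?M" and eq: "f B = f B'"
    show "B = B'"
    proof (rule ccontr)
      assume "B \<noteq> B'"
      with B B' centre have "B \<inter> B' = {c}" by blast
      moreover have "f B \<in> B \<inter> B'" using f[OF B] f[OF B'] eq by simp
      ultimately have "f B = c" by blast
      moreover from B A centre have "A \<inter> B = {c}" by blast
      ultimately show False using f[OF B] X(2) by blast
    qed
  qed
  moreover have "f ` ?M \<subseteq> X" using f by blast
  ultimately show ?thesis using X(1) by (rule card_inj_on_le)
qed

lemma exists_substar_avoiding: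
  assumes S: "finite S" and centre: "\<forall>A\<in>S. \<forall>B\<in>S. A \<noteq> B \<longrightarrow> A \<inter> B = {c}"
    and X: "\<forall>A\<in>S. finite (X A) \<and> X A \<inter> A = {} \<and> card (X A) \<le> m"
    and size: "(2*m+1)*r \<le> card S"
  shows "\<exists>I\<subseteq>S. card I = r \<and> (\<forall>A\<in>I. \<forall>B\<in>I. A \<noteq> B \<longrightarrow> B \<inter> X A = {})"
proof -
  have "\<forall>A\<in>S. card {B\<in>S. A \<noteq> B \<and> B \<inter> X A \<noteq> {}} \<le> m"
  proof
    fix A assume "A \<in> S"
    with X have "finite (X A)" "X A \<inter> A = {}" "card (X A) \<le> m" by simp_all
    with card_star_edges_meeting_le[OF centre \<open>A \<in> S\<close>]
    have "card {B\<in>S. B \<noteq> A \<and> B \<inter> X A \<noteq> {}} \<le> m" by (meson le_trans)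
    then show "card {B\<in>S. A \<noteq> B \<and> B \<inter> X A \<noteq> {}} \<le> m"
      by (simp add: eq_commute[of A])
  qed
  from exists_independent_subset_bounded_outdegree[OF S this size] show ?thesis by blast
qed

lemma is_star_subset:
  assumes "is_star S q" "S' \<subseteq> S" "card S' = r"
  shows "is_star S' r"
proof -
  from assms(1) obtain c where "\<forall>A\<in>S. \<forall>B\<in>S. A \<noteq> B \<longrightarrow> A \<inter> B = {c}"
    by (auto simp: is_star_def)
  with assms show ?thesis
    unfolding is_star_def by (metis finite_subset subsetD)
qed

lemma exists_nice_substar:
  fixes H S :: "'a set set"
  assumes H: "three_graph H" and star: "is_star S q" and q: "(6*k+1)*r \<le> q"
    and w: "\<forall>e\<in>shadow2 S. w e \<le> k \<and> w e + 1 \<le> card {A\<in>H. e \<subseteq> A}"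
  shows "\<exists>S'\<subseteq>S. is_star S' r \<and> (\<forall>e\<in>shadow2 S'. w e \<le> card (link H e - \<Union>S'))"
proof -
  obtain c where centre: "\<forall>A\<in>S. \<forall>B\<in>S. A \<noteq> B \<longrightarrow> A \<inter> B = {c}"
    using star by (auto simp: is_star_def)
  have "\<forall>A\<in>S. \<exists>X. finite X \<and> X \<inter> A = {} \<and> card X \<le> 3*k \<and>
          (\<forall>e. e \<subseteq> A \<and> card e = 2 \<longrightarrow> w e \<le> card (link H e \<inter> X))"
  proof
    fix A assume "A \<in> S"
    have "card A = 3" using star \<open>A \<in> S\<close> by (simp add: is_star_def)
    moreover have "\<forall>e. e \<subseteq> A \<and> card e = 2 \<longrightarrow> w e \<le> k \<and> w e + 1 \<le> card {B\<in>H. e \<subseteq> B}"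
      using w \<open>A \<in> S\<close> unfolding shadow2_def by blast
    ultimately show "\<exists>X. finite X \<and> X \<inter> A = {} \<and> card X \<le> 3*k \<and>
          (\<forall>e. e \<subseteq> A \<and> card e = 2 \<longrightarrow> w e \<le> card (link H e \<inter> X))"
      by (rule exists_reserved_link_vertices[OF H])
  qed
  from bchoice[OF this] obtain X where X: "\<forall>A\<in>S. finite (X A) \<and> X A \<inter> A = {} \<and> card (X A) \<le> 3*k \<and>
          (\<forall>e. e \<subseteq> A \<and> card e = 2 \<longrightarrow> w e \<le> card (link H e \<inter> X A))"
    by blast
  have "\<forall>A\<in>S. finite (X A) \<and> X A \<inter> A = {} \<and> card (X A) \<le> 3*k" using X by blast
  moreover have "finite S" "(2*(3*k)+1)*r \<le> card S" using star q by (auto simp: is_star_def)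
  ultimately obtain I where I: "I \<subseteq> S" "card I = r"
    and avoid: "\<forall>A\<in>I. \<forall>B\<in>I. A \<noteq> B \<longrightarrow> B \<inter> X A = {}"
    using exists_substar_avoiding[OF _ centre, of X "3*k" r] by blast
  have "w e \<le> card (link H e - \<Union>I)" if "e \<in> shadow2 I" for e
  proof -
    obtain A where A: "A \<in> I" "e \<subseteq> A" "card e = 2" using \<open>e \<in> shadow2 I\<close> by (auto simp: shadow2_def)
    have "X A \<inter> B = {}" if "B \<in> I" for B
    proof (cases "B = A")
      case True
      then show ?thesis using X A(1) I(1) by blast
    next
      case False
      then show ?thesis using avoid A(1) that by blast
    qed
    hence "link H e \<inter> X A \<subseteq> link H e - \<Union>I" by blast
    hence "card (link H e \<inter> X A) \<le> card (link H e - \<Union>I)"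
      using finite_link[OF H] by (intro card_mono) auto
    moreover have "w e \<le> card (link H e \<inter> X A)" using X A I(1) by blast
    ultimately show ?thesis by linarith
  qed
  moreover have "is_star I r" using is_star_subset[OF star I] .
  ultimately show ?thesis using I(1) by blast
qed

theorem lemma2:
  shows "\<forall>k::nat. \<forall>r::nat. k > 0 \<longrightarrow> r > 0 \<longrightarrow>
    (\<exists>q0::nat. \<forall>q\<ge>q0. \<forall>(H::nat set set) S (w::nat set \<Rightarrow> nat).
       three_graph H \<longrightarrow> S \<subseteq> H \<longrightarrow> is_star S q \<longrightarrow>
       (\<forall>e\<in>shadow2 S. w e \<le> k \<and> card {A\<in>H. e \<subseteq> A} \<ge> w e + 1) \<longrightarrow>
       (\<exists>S'\<subseteq>S. is_star S' r \<and>
          (\<forall>e\<in>shadow2 S'. card (link H e - \<Union>S') \<ge> w e)))"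
  apply (intro allI impI)
  subgoal for k r
    by (intro exI[of _ "(6*k+1)*r"] allI impI exists_nice_substar) auto
  done

end
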